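(* Let $G=(V,E)$ be a directed graph with $n$ vertices and $m$ edges and let $\phi\in(0,1)$. Consider the following procedure: start with $\mathcal{X}=\{V\}$ and $E_{Rest}=\emptyset$; while there is $X\in\mathcal{X}$ and $S\subseteq X$ such that $(S,X\setminus S)$ is a $\phi$-out-sparse cut in $G[X]$ or in $\overleftarrow{G}[X]$, replace $X$ in $\mathcal{X}$ by $S$ and $X\setminus S$, and add to $E_{Rest}$ the smaller of the two edge sets $E_{G[X]}(S,X\setminus S)$ and $E_{G[X]}(X\setminus S,S)$. Then, for every choice of the sparse cuts, the procedure terminates after at most $n-1$ iterations, and its output satisfies: (i) $G[X]$ is a $\phi$-expander for every $X\in\mathcal{X}$; (ii) $|E_{Rest}|\le 2\phi m(\log_2(2m)+1)$; (iii) the graph $G/\{X\}_{X\in\mathcal{X}}\setminus E_{Rest}$ has no directed cycle other than self-loops.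
   Context: Graphs are directed multigraphs (self-loops allowed); $\deg_G(v)$ counts incident edges with a self-loop counting $2$; $\mathrm{vol}_G(S)=\sum_{v\in S}\deg_G(v)$; $E_G(A,B)$ is the set of edges with tail in $A$ and head in $B$; $\overleftarrow{G}$ is $G$ with edges reversed; $G[X]$ is the induced subgraph; $G/\{X\}_{X\in\mathcal{X}}$ is $G$ with each $X$ contracted to a single vertex. In a graph $H$ on vertex set $X$, a cut $(S,X\setminus S)$ is $\phi$-out-sparse if $\mathrm{vol}_H(S)\le\mathrm{vol}_H(X\setminus S)$ and $|E_H(S,X\setminus S)|<\phi\,\mathrm{vol}_H(S)$; $H$ is a $\phi$-expander if neither $H$ nor $\overleftarrow{H}$ has a $\phi$-out-sparse cut. *)

theory Defs
  imports Complex_Main "Graph_Theory.Digraph" "Graph_Theory.Digraph_Component"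
begin

text \<open>Degree: incident arcs, a self-loop counts twice (once as in-arc, once as out-arc).\<close>
definition gdeg :: "('a,'b) pre_digraph \<Rightarrow> 'a \<Rightarrow> nat" where
  "gdeg H v = in_degree H v + out_degree H v"

definition vol :: "('a,'b) pre_digraph \<Rightarrow> 'a set \<Rightarrow> nat" where
  "vol H S = (\<Sum>v\<in>S. gdeg H v)"

definition arcs_between :: "('a,'b) pre_digraph \<Rightarrow> 'a set \<Rightarrow> 'a set \<Rightarrow> 'b set" where
  "arcs_between H A B = {e \<in> arcs H. tail H e \<in> A \<and> head H e \<in> B}"

definition rev_graph :: "('a,'b) pre_digraph \<Rightarrow> ('a,'b) pre_digraph" where
  "rev_graph H = \<lparr>verts = verts H, arcs = arcs H, tail = head H, head = tail H\<rparr>"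

definition out_sparse :: "('a,'b) pre_digraph \<Rightarrow> real \<Rightarrow> 'a set \<Rightarrow> bool" where
  "out_sparse H \<phi> S \<longleftrightarrow> S \<subseteq> verts H \<and>
     vol H S \<le> vol H (verts H - S) \<and>
     real (card (arcs_between H S (verts H - S))) < \<phi> * real (vol H S)"

definition expander :: "('a,'b) pre_digraph \<Rightarrow> real \<Rightarrow> bool" where
  "expander H \<phi> \<longleftrightarrow> (\<nexists>S. out_sparse H \<phi> S) \<and> (\<nexists>S. out_sparse (rev_graph H) \<phi> S)"

text \<open>One iteration of the procedure on a state (partition, E_Rest).\<close>
definition decomp_step :: "('a,'b) pre_digraph \<Rightarrow> real \<Rightarrow>
    ('a set set \<times> 'b set) \<Rightarrow> ('a set set \<times> 'b set) \<Rightarrow> bool" where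
  "decomp_step G \<phi> st st' \<longleftrightarrow>
     (\<exists>X S F. X \<in> fst st \<and> S \<subseteq> X \<and>
        (out_sparse (G \<restriction> X) \<phi> S \<or> out_sparse (rev_graph (G \<restriction> X)) \<phi> S) \<and>
        (let E1 = arcs_between (G \<restriction> X) S (X - S);
             E2 = arcs_between (G \<restriction> X) (X - S) S
         in (F = E1 \<and> card E1 \<le> card E2) \<or> (F = E2 \<and> card E2 \<le> card E1)) \<and>
        st' = (insert S (insert (X - S) (fst st - {X})), snd st \<union> F))"

text \<open>Arcs between distinct parts of the contracted graph G / P with arcs R removed
  (self-loops of the contraction are ignored).\<close>
definition contracted_rel :: "('a,'b) pre_digraph \<Rightarrow> 'a set set \<Rightarrow> 'b set \<Rightarrow> ('a set \<times> 'a set) set" where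
  "contracted_rel G P R = {(X, Y). X \<in> P \<and> Y \<in> P \<and> X \<noteq> Y \<and>
      (\<exists>e \<in> arcs G - R. tail G e \<in> X \<and> head G e \<in> Y)}"

end

theory Submission imports Defs begin

text \<open>
  Each split of a part \<open>X\<close> along a \<open>\<phi>\<close>-sparse cut \<open>(S, X - S)\<close> with
  \<open>a = vol S \<le> vol (X - S) = b\<close> removes fewer than \<open>\<phi> a\<close> arcs, while the potential
  \<open>\<Sum>X. vol X log\<^sub>2 vol X\<close> drops by at least \<open>a\<close>, because
  \<open>a log a + b log b + a \<le> (a + b) log (a + b)\<close> for \<open>a \<le> b\<close>. Hence
  \<open>|E\<^sub>R\<^sub>e\<^sub>s\<^sub>t| + \<phi> \<cdot> potential\<close> never increases and is initially at most \<open>\<phi> \<cdot> 2m log\<^sub>2 2m\<close>.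
  The number of splits is bounded since \<open>\<Sum>X. |X| - 1\<close> drops by one per split.
  Acyclicity is kept by ranking the parts: the two halves of a split part take its old
  rank, ordered so that the remaining arcs between them go forward.
\<close>

lemma verts_rev_graph [simp]: "verts (rev_graph H) = verts H"
  unfolding rev_graph_def by simp

lemma in_degree_rev_graph [simp]: "in_degree (rev_graph H) v = out_degree H v"
  unfolding in_degree_def out_degree_def in_arcs_def out_arcs_def rev_graph_def by simp

lemma out_degree_rev_graph [simp]: "out_degree (rev_graph H) v = in_degree H v"
  unfolding in_degree_def out_degree_def in_arcs_def out_arcs_def rev_graph_def by simp

lemma vol_rev_graph [simp]: "vol (rev_graph H) S = vol H S"
  unfolding vol_def gdeg_def by (simp add: add.commute)

lemma arcs_rev_graph [simp]: "arcs (rev_graph H) = arcs H"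
  unfolding rev_graph_def by simp

lemma arcs_between_rev_graph: "arcs_between (rev_graph H) A B = arcs_between H B A"
  unfolding arcs_between_def rev_graph_def by auto

lemma vol_Diff: "finite X \<Longrightarrow> S \<subseteq> X \<Longrightarrow> vol H X = vol H S + vol H (X - S)"
  unfolding vol_def by (metis sum.subset_diff add.commute)

lemma sum_in_degree_le_card_arcs:
  assumes "finite (arcs H)" "finite V"
  shows "(\<Sum>v\<in>V. in_degree H v) \<le> card (arcs H)"
proof -
  have "(\<Sum>v\<in>V. in_degree H v) = card (\<Union>v\<in>V. in_arcs H v)"
    unfolding in_degree_def
    by (rule card_UN_disjoint[symmetric]) (use assms in \<open>auto simp: in_arcs_def\<close>)
  also have "\<dots> \<le> card (arcs H)"
    by (rule card_mono) (use assms in \<open>auto simp: in_arcs_def\<close>)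
  finally show ?thesis .
qed

lemma vol_le_twice_card_arcs:
  assumes "finite (arcs H)" "finite V"
  shows "vol H V \<le> 2 * card (arcs H)"
  using sum_in_degree_le_card_arcs[OF assms] sum_in_degree_le_card_arcs[of "rev_graph H", OF _ assms(2)]
    assms(1)
  unfolding vol_def gdeg_def by (simp add: sum.distrib)

lemma vol_induce_subgraph_mono:
  assumes "finite (arcs G)" "S \<subseteq> X"
  shows "vol (G \<restriction> S) S \<le> vol (G \<restriction> X) S"
  unfolding vol_def gdeg_def in_degree_def out_degree_def
proof (intro sum_mono add_mono card_mono)
  show "finite (in_arcs (G \<restriction> X) v)" "finite (out_arcs (G \<restriction> X) v)" for v
    using assms(1) unfolding in_arcs_def out_arcs_def by auto
  show "in_arcs (G \<restriction> S) v \<subseteq> in_arcs (G \<restriction> X) v" "out_arcs (G \<restriction> S) v \<subseteq> out_arcs (G \<restriction> X) v" for v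
    using assms(2) unfolding in_arcs_def out_arcs_def by auto
qed

definition xlogx :: "nat \<Rightarrow> real" where
  "xlogx x = real x * log 2 (real x)"

lemma xlogx_nonneg: "0 \<le> xlogx x"
  unfolding xlogx_def by (cases "x = 0") auto

lemma xlogx_mono: "x \<le> y \<Longrightarrow> xlogx x \<le> xlogx y"
  using xlogx_nonneg[of y] unfolding xlogx_def by (cases "x = 0") (auto intro: mult_mono)

lemma xlogx_add_ge:
  assumes "0 < a" "a \<le> b"
  shows "xlogx a + xlogx b + real a \<le> xlogx (a + b)"
proof -
  have a: "0 < real a" and b: "0 < real b" using assms by auto
  have "xlogx (a + b) - xlogx a - xlogx b
      = real a * log 2 ((real a + real b) / real a) + real b * log 2 ((real a + real b) / real b)"
    unfolding xlogx_def using a b by (simp add: log_divide algebra_simps)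
  moreover have "1 \<le> log 2 ((real a + real b) / real a)"
    using a assms(2) by (simp add: field_simps)
  moreover have "0 \<le> log 2 ((real a + real b) / real b)"
    using a b by simp
  ultimately show ?thesis using a b
    by (smt (verit) mult_le_cancel_left1 mult_nonneg_nonneg)
qed

lemma sum_replace_le:
  fixes f :: "'x \<Rightarrow> 'c::ordered_comm_monoid_add"
  assumes "finite P" "X \<in> P" "\<And>Y. 0 \<le> f Y"
  shows "sum f (insert S (insert T (P - {X}))) + f X \<le> f S + f T + sum f P"
proof -
  have insert_le: "sum f (insert x A) \<le> f x + sum f A" if "finite A" for x A
    using that assms(3) by (simp add: sum.insert_if add_increasing)
  have "sum f (insert S (insert T (P - {X}))) \<le> f S + (f T + sum f (P - {X}))"
    using insert_le[of "insert T (P - {X})" S] insert_le[of "P - {X}" T] assms(1)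
    by (auto intro: order_trans add_left_mono)
  from add_right_mono[OF this, of "f X"] show ?thesis
    using sum.remove[OF assms(1,2), of f] by (simp add: ac_simps)
qed

lemma decomp_stepE:
  assumes "decomp_step G \<phi> (P, R) (P', R')"
  obtains X S F where "X \<in> P" "S \<subseteq> X" "S \<noteq> {}" "X - S \<noteq> {}"
    "0 < vol (G \<restriction> X) S" "vol (G \<restriction> X) S \<le> vol (G \<restriction> X) (X - S)"
    "real (card F) < \<phi> * real (vol (G \<restriction> X) S)"
    "F = arcs_between (G \<restriction> X) S (X - S) \<or> F = arcs_between (G \<restriction> X) (X - S) S"
    "P' = insert S (insert (X - S) (P - {X}))" "R' = R \<union> F"
proof -
  from assms obtain X S F where X: "X \<in> P" and S: "S \<subseteq> X"
    and sparse: "out_sparse (G \<restriction> X) \<phi> S \<or> out_sparse (rev_graph (G \<restriction> X)) \<phi> S"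
    and F: "(F = arcs_between (G \<restriction> X) S (X - S) \<or> F = arcs_between (G \<restriction> X) (X - S) S)
      \<and> card F \<le> card (arcs_between (G \<restriction> X) S (X - S))
      \<and> card F \<le> card (arcs_between (G \<restriction> X) (X - S) S)"
    and P': "P' = insert S (insert (X - S) (P - {X}))" and R': "R' = R \<union> F"
    unfolding decomp_step_def Let_def by auto
  have balanced: "vol (G \<restriction> X) S \<le> vol (G \<restriction> X) (X - S)"
    and cut: "real (card F) < \<phi> * real (vol (G \<restriction> X) S)"
    using sparse F unfolding out_sparse_def arcs_between_rev_graph
    by (auto intro: le_less_trans)
  then have pos: "0 < vol (G \<restriction> X) S"
    by (cases "vol (G \<restriction> X) S") auto
  moreover have "S \<noteq> {}"
    using pos by (auto simp: vol_def)
  moreover have "X - S \<noteq> {}"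
  proof
    assume "X - S = {}"
    then have "vol (G \<restriction> X) (X - S) = 0" unfolding vol_def by (simp only: sum.empty)
    with pos balanced show False by simp
  qed
  ultimately show ?thesis
    using that X S pos balanced cut F P' R' by blast
qed

lemma decomp_step_parts:
  assumes "decomp_step G \<phi> (P, R) (P', R')" "finite P" "\<forall>X\<in>P. X \<subseteq> verts G"
  shows "finite P'" "\<forall>X\<in>P'. X \<subseteq> verts G"
  using assms by (auto elim!: decomp_stepE)

lemma reachable_parts:
  assumes "(decomp_step G \<phi>)\<^sup>*\<^sup>* ({verts G}, {}) (P, R)"
  shows "finite P \<and> (\<forall>X\<in>P. X \<subseteq> verts G)"
  using assms
proof (induction "(P, R)" arbitrary: P R rule: rtranclp_induct)
  case (step st)
  then show ?case
    by (cases st) (metis decomp_step_parts)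
qed simp

definition parts_excess :: "'a set set \<Rightarrow> nat" where
  "parts_excess P = (\<Sum>X\<in>P. card X - 1)"

lemma decomp_step_parts_excess:
  assumes "decomp_step G \<phi> (P, R) (P', R')" "finite P" "\<forall>X\<in>P. finite X"
  shows "parts_excess P' < parts_excess P"
proof -
  obtain X S F where X: "X \<in> P" and S: "S \<subseteq> X" "S \<noteq> {}" "X - S \<noteq> {}"
    and P': "P' = insert S (insert (X - S) (P - {X}))"
    using assms(1) by (elim decomp_stepE)
  have "finite X"
    using X assms(3) by blast
  then have "finite S"
    using S(1) finite_subset by blast
  have "card X = card S + card (X - S)" "card S \<noteq> 0" "card (X - S) \<noteq> 0"
    using card_Diff_subset[OF \<open>finite S\<close> S(1)] card_mono[OF \<open>finite X\<close> S(1)]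
      \<open>finite X\<close> \<open>finite S\<close> S by auto
  moreover have "parts_excess P' + (card X - 1) \<le> (card S - 1) + (card (X - S) - 1) + parts_excess P"
    unfolding parts_excess_def P' by (rule sum_replace_le) (use assms(2) X in auto)
  ultimately show ?thesis by linarith
qed

lemma decomp_steps_le:
  assumes "fin_digraph G" "(decomp_step G \<phi> ^^ k) ({verts G}, {}) (P, R)"
  shows "k + parts_excess P \<le> card (verts G) - 1"
  using assms(2)
proof (induction k arbitrary: P R)
  case 0
  then show ?case by (auto simp: parts_excess_def)
next
  case (Suc k)
  then obtain P0 R0 where steps: "(decomp_step G \<phi> ^^ k) ({verts G}, {}) (P0, R0)"
    and step: "decomp_step G \<phi> (P0, R0) (P, R)"
    by (metis relpowp_Suc_E surj_pair)
  have "finite P0" "\<forall>X\<in>P0. finite X"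
    using reachable_parts[OF relpowp_imp_rtranclp[OF steps]] fin_digraph.finite_verts[OF assms(1)]
    by (auto intro: finite_subset)
  then show ?case
    using decomp_step_parts_excess[OF step] Suc.IH[OF steps] by linarith
qed

definition potential :: "('a,'b) pre_digraph \<Rightarrow> 'a set set \<Rightarrow> real" where
  "potential G P = (\<Sum>X\<in>P. xlogx (vol (G \<restriction> X) X))"

lemma decomp_step_potential:
  assumes "decomp_step G \<phi> (P, R) (P', R')"
    and "finite (arcs G)" "finite P" "\<forall>X\<in>P. finite X"
  shows "real (card R') + \<phi> * potential G P' \<le> real (card R) + \<phi> * potential G P"
proof -
  obtain X S F where X: "X \<in> P" and S: "S \<subseteq> X"
    and pos: "0 < vol (G \<restriction> X) S" and balanced: "vol (G \<restriction> X) S \<le> vol (G \<restriction> X) (X - S)"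
    and cut: "real (card F) < \<phi> * real (vol (G \<restriction> X) S)"
    and P': "P' = insert S (insert (X - S) (P - {X}))" and R': "R' = R \<union> F"
    using assms(1) by (elim decomp_stepE)
  define a where "a = vol (G \<restriction> X) S"
  define b where "b = vol (G \<restriction> X) (X - S)"
  have "0 < \<phi> * real a"
    using cut of_nat_0_le_iff[of "card F"] unfolding a_def by linarith
  with pos have "0 < \<phi>"
    unfolding a_def by (simp add: zero_less_mult_iff)
  have "potential G P' + xlogx (vol (G \<restriction> X) X)
      \<le> xlogx (vol (G \<restriction> S) S) + xlogx (vol (G \<restriction> (X - S)) (X - S)) + potential G P"
    unfolding potential_def P' by (rule sum_replace_le) (use assms(3) X xlogx_nonneg in auto)
  also have "\<dots> \<le> xlogx a + xlogx b + potential G P"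
    unfolding a_def b_def using assms(2) S
    by (intro add_mono xlogx_mono vol_induce_subgraph_mono order_refl) auto
  finally have "potential G P' + real a \<le> potential G P"
    using xlogx_add_ge[of a b] pos balanced vol_Diff[of X S "G \<restriction> X"] assms(4) X S
    unfolding a_def b_def by auto
  then have "\<phi> * potential G P' + \<phi> * real a \<le> \<phi> * potential G P"
    using \<open>0 < \<phi>\<close> by (metis distrib_left mult_left_mono less_imp_le)
  moreover have "real (card R') \<le> real (card R) + real (card F)"
    unfolding R' using card_Un_le[of R F] by linarith
  ultimately show ?thesis
    using cut unfolding a_def by linarith
qed

lemma reachable_potential:
  assumes "fin_digraph G" "(decomp_step G \<phi>)\<^sup>*\<^sup>* ({verts G}, {}) (P, R)"
  shows "real (card R) + \<phi> * potential G P \<le> \<phi> * xlogx (vol (G \<restriction> verts G) (verts G))"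
  using assms(2)
proof (induction "(P, R)" arbitrary: P R rule: rtranclp_induct)
  case base
  then show ?case by (simp add: potential_def)
next
  case (step st)
  obtain P0 R0 where st: "st = (P0, R0)" by (cases st)
  have "finite P0" "\<forall>X\<in>P0. finite X"
    using reachable_parts[OF step.hyps(1)[unfolded st]] fin_digraph.finite_verts[OF assms(1)]
    by (auto intro: finite_subset)
  then show ?case
    using decomp_step_potential[OF step.hyps(2)[unfolded st]] step.hyps(3)[OF st]
      fin_digraph.finite_arcs[OF assms(1)] by fastforce
qed

lemma reachable_card_removed_arcs_le:
  assumes "fin_digraph G" "0 \<le> \<phi>" "(decomp_step G \<phi>)\<^sup>*\<^sup>* ({verts G}, {}) (P, R)"
  shows "real (card R) \<le> 2 * \<phi> * real (card (arcs G)) * log 2 (2 * real (card (arcs G)))"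
proof -
  have "0 \<le> potential G P"
    unfolding potential_def by (simp add: sum_nonneg xlogx_nonneg)
  have "vol (G \<restriction> verts G) (verts G) \<le> 2 * card (arcs (G \<restriction> verts G))"
    using assms(1) by (intro vol_le_twice_card_arcs) (auto simp: fin_digraph_def fin_digraph_axioms_def)
  also have "card (arcs (G \<restriction> verts G)) \<le> card (arcs G)"
    using assms(1) by (intro card_mono) (auto simp: fin_digraph_def fin_digraph_axioms_def)
  finally have "xlogx (vol (G \<restriction> verts G) (verts G)) \<le> xlogx (2 * card (arcs G))"
    by (rule xlogx_mono) simp
  then have "real (card R) \<le> \<phi> * xlogx (2 * card (arcs G))"
    using reachable_potential[OF assms(1,3)] \<open>0 \<le> potential G P\<close> assms(2)
    by (smt (verit) mult_left_mono mult_nonneg_nonneg)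
  then show ?thesis
    unfolding xlogx_def by simp
qed

definition ranked :: "('a,'b) pre_digraph \<Rightarrow> 'a set set \<Rightarrow> 'b set \<Rightarrow> bool" where
  "ranked G P R \<longleftrightarrow> (\<exists>rank :: 'a set \<Rightarrow> nat. \<forall>(A, B) \<in> contracted_rel G P R. rank A < rank B)"

lemma acyclic_if_ranked:
  assumes "ranked G P R"
  shows "acyclic (contracted_rel G P R)"
proof -
  obtain rank :: "'a set \<Rightarrow> nat" where "\<forall>(A, B) \<in> contracted_rel G P R. rank A < rank B"
    using assms unfolding ranked_def by blast
  then have "contracted_rel G P R \<subseteq> measure rank"
    by auto
  then show ?thesis
    using acyclic_subset wf_acyclic wf_measure by blast
qed

lemma ranked_split:
  assumes X: "X \<in> P" and lo: "lo \<subseteq> X" and hi: "hi \<subseteq> X" and "lo \<noteq> hi"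
    and backward: "\<And>e. e \<in> arcs G \<Longrightarrow> tail G e \<in> hi \<Longrightarrow> head G e \<in> lo \<Longrightarrow> e \<in> F"
    and "ranked G P R"
  shows "ranked G (insert lo (insert hi (P - {X}))) (R \<union> F)"
proof -
  obtain rank :: "'a set \<Rightarrow> nat" where rank: "\<forall>(A, B) \<in> contracted_rel G P R. rank A < rank B"
    using \<open>ranked G P R\<close> unfolding ranked_def by blast
  define parent where "parent Y = (if Y = lo \<or> Y = hi then X else Y)" for Y
  \<comment> \<open>Doubling the old ranks makes room to put \<open>lo\<close> directly before \<open>hi\<close>.\<close>
  define rank' where
    "rank' Y = (if Y = lo then 2 * rank X else if Y = hi then 2 * rank X + 1 else 2 * rank Y)" for Y
  have "rank' A < rank' B" if "(A, B) \<in> contracted_rel G (insert lo (insert hi (P - {X}))) (R \<union> F)" for A B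
  proof -
    from that obtain e where A: "A \<in> insert lo (insert hi (P - {X}))"
      and B: "B \<in> insert lo (insert hi (P - {X}))" and "A \<noteq> B"
      and e: "e \<in> arcs G" "e \<notin> R" "e \<notin> F" "tail G e \<in> A" "head G e \<in> B"
      unfolding contracted_rel_def by auto
    show ?thesis
    proof (cases "parent A = parent B")
      case False
      have "(parent A, parent B) \<in> contracted_rel G P R"
        using A B X lo hi e False unfolding contracted_rel_def parent_def by (auto split: if_splits)
      then have "rank (parent A) < rank (parent B)"
        using rank by auto
      then show ?thesis
        unfolding rank'_def parent_def by (auto split: if_splits)
    next
      case True
      then have "(A = lo \<and> B = hi) \<or> (A = hi \<and> B = lo)"
        using A B \<open>A \<noteq> B\<close> unfolding parent_def by (auto split: if_splits)
      then show ?thesis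
        using backward e \<open>lo \<noteq> hi\<close> unfolding rank'_def by auto
    qed
  qed
  then show ?thesis
    unfolding ranked_def by blast
qed

lemma decomp_step_ranked:
  assumes "decomp_step G \<phi> (P, R) (P', R')" "ranked G P R"
  shows "ranked G P' R'"
proof -
  obtain X S F where X: "X \<in> P" and S: "S \<subseteq> X" "S \<noteq> {}"
    and F: "F = arcs_between (G \<restriction> X) S (X - S) \<or> F = arcs_between (G \<restriction> X) (X - S) S"
    and P': "P' = insert S (insert (X - S) (P - {X}))" and R': "R' = R \<union> F"
    using assms(1) by (elim decomp_stepE)
  have "S \<noteq> X - S"
    using S by blast
  from F show ?thesis
  proof
    assume "F = arcs_between (G \<restriction> X) S (X - S)"
    then have "ranked G (insert (X - S) (insert S (P - {X}))) (R \<union> F)"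
      using X S \<open>S \<noteq> X - S\<close> assms(2)
      by (intro ranked_split) (auto simp: arcs_between_def)
    then show ?thesis
      unfolding P' R' by (simp add: insert_commute)
  next
    assume "F = arcs_between (G \<restriction> X) (X - S) S"
    then show ?thesis
      unfolding P' R' using X S \<open>S \<noteq> X - S\<close> assms(2)
      by (intro ranked_split) (auto simp: arcs_between_def)
  qed
qed

lemma reachable_ranked:
  assumes "(decomp_step G \<phi>)\<^sup>*\<^sup>* ({verts G}, {}) (P, R)"
  shows "ranked G P R"
  using assms
proof (induction "(P, R)" arbitrary: P R rule: rtranclp_induct)
  case base
  then show ?case
    unfolding ranked_def contracted_rel_def by auto
next
  case (step st)
  then show ?case
    by (cases st) (metis decomp_step_ranked)
qed

lemma expander_if_no_decomp_step:
  assumes "X \<in> P" "\<nexists>st'. decomp_step G \<phi> (P, R) st'"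
  shows "expander (G \<restriction> X) \<phi>"
proof -
  have False if "out_sparse (G \<restriction> X) \<phi> S \<or> out_sparse (rev_graph (G \<restriction> X)) \<phi> S" for S
  proof -
    define E1 where "E1 = arcs_between (G \<restriction> X) S (X - S)"
    define E2 where "E2 = arcs_between (G \<restriction> X) (X - S) S"
    define F where "F = (if card E1 \<le> card E2 then E1 else E2)"
    have "S \<subseteq> X"
      using that unfolding out_sparse_def by auto
    then have "decomp_step G \<phi> (P, R) (insert S (insert (X - S) (P - {X})), R \<union> F)"
      unfolding decomp_step_def Let_def
      by (intro exI[of _ X] exI[of _ S] exI[of _ F]) (use assms(1) that in \<open>auto simp: F_def E1_def E2_def\<close>)
    then show False
      using assms(2) by blast
  qed
  then show ?thesis
    unfolding expander_def by blast
qed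

theorem mainTheorem4:
  fixes G :: "('a,'b) pre_digraph" and \<phi> :: real
  assumes "fin_digraph G"
    and "0 < \<phi>" and "\<phi> < 1"
  shows "(\<forall>k st. (decomp_step G \<phi> ^^ k) ({verts G}, {}) st \<longrightarrow> k \<le> card (verts G) - 1)
       \<and> (\<forall>P R. (decomp_step G \<phi>)\<^sup>*\<^sup>* ({verts G}, {}) (P, R) \<and> (\<nexists>st'. decomp_step G \<phi> (P, R) st') \<longrightarrow>
            (\<forall>X \<in> P. expander (G \<restriction> X) \<phi>)
          \<and> real (card R) \<le> 2 * \<phi> * real (card (arcs G)) * (log 2 (2 * real (card (arcs G))) + 1)
          \<and> acyclic (contracted_rel G P R))"
proof (intro conjI allI impI ballI)
  fix k st
  assume "(decomp_step G \<phi> ^^ k) ({verts G}, {}) st"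
  then have "k + parts_excess (fst st) \<le> card (verts G) - 1"
    using decomp_steps_le[OF assms(1)] by (metis prod.collapse)
  then show "k \<le> card (verts G) - 1"
    by simp
next
  fix P R
  assume terminal: "(decomp_step G \<phi>)\<^sup>*\<^sup>* ({verts G}, {}) (P, R) \<and> (\<nexists>st'. decomp_step G \<phi> (P, R) st')"
  then show "expander (G \<restriction> X) \<phi>" if "X \<in> P" for X
    using expander_if_no_decomp_step that by blast
  show "acyclic (contracted_rel G P R)"
    using terminal reachable_ranked acyclic_if_ranked by blast
  have "real (card R) \<le> 2 * \<phi> * real (card (arcs G)) * log 2 (2 * real (card (arcs G)))"
    using reachable_card_removed_arcs_le[OF assms(1) less_imp_le[OF assms(2)]] terminal by blast
  moreover have "0 \<le> 2 * \<phi> * real (card (arcs G))"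
    using assms(2) by simp
  ultimately show "real (card R) \<le> 2 * \<phi> * real (card (arcs G)) * (log 2 (2 * real (card (arcs G))) + 1)"
    by (simp add: distrib_left)
qed

end
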